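(* Let $\mathcal{O}$ be an $m$-dimensional pseudo USO with $m\geq 3$, with vertex set $[V,W]$, such that $V$ is a global sink of $\mathcal{O}$. Then $\mathcal{O}$ contains a directed cycle all of whose vertices are of the form $V\cup\{i\}$ or $V\cup\{i,j\}$ with $i,j\in W\setminus V$.
   Context: For sets $U,V$ let $U\oplus V=(U\cup V)\setminus(U\cap V)$, and for $U\subseteq W$ let $[U,W]=\{X: U\subseteq X\subseteq W\}$. A cube orientation is a directed graph with vertex set $[U,W]$ which, for every vertex $X$ and every $i\in W\setminus U$, contains exactly one of the directed edges $(X,X\oplus\{i\})$ and $(X\oplus\{i\},X)$; its dimension is $|W\setminus U|$. A face is the subgraph induced by a subinterval $[U',W']\subseteq[U,W]$; it is proper if $[U',W']\neq[U,W]$. A sink is a vertex with no outgoing edge. A pseudo USO is a cube orientation that does not have a unique global sink, but in which every proper face has a unique sink. *)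

theory Defs
  imports Main
begin

definition symdiff :: "'a set \<Rightarrow> 'a set \<Rightarrow> 'a set" where
  "symdiff A B = (A \<union> B) - (A \<inter> B)"

definition interval :: "'a set \<Rightarrow> 'a set \<Rightarrow> 'a set set" where
  "interval U W = {X. U \<subseteq> X \<and> X \<subseteq> W}"

definition cube_orientation :: "'a set \<Rightarrow> 'a set \<Rightarrow> ('a set \<times> 'a set) set \<Rightarrow> bool" where
  "cube_orientation U W E \<longleftrightarrow>
     U \<subseteq> W \<and>
     E \<subseteq> {(X, symdiff X {i}) | X i. X \<in> interval U W \<and> i \<in> W - U} \<and>
     (\<forall>X \<in> interval U W. \<forall>i \<in> W - U.
        ((X, symdiff X {i}) \<in> E) \<noteq> ((symdiff X {i}, X) \<in> E))"

definition cube_dim :: "'a set \<Rightarrow> 'a set \<Rightarrow> nat" where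
  "cube_dim U W = card (W - U)"

definition face_sink :: "('a set \<times> 'a set) set \<Rightarrow> 'a set \<Rightarrow> 'a set \<Rightarrow> 'a set \<Rightarrow> bool" where
  "face_sink E U' W' X \<longleftrightarrow> X \<in> interval U' W' \<and> (\<forall>Y \<in> interval U' W'. (X, Y) \<notin> E)"

definition has_unique_sink :: "('a set \<times> 'a set) set \<Rightarrow> 'a set \<Rightarrow> 'a set \<Rightarrow> bool" where
  "has_unique_sink E U' W' \<longleftrightarrow> (\<exists>!X. face_sink E U' W' X)"

definition pseudo_USO :: "'a set \<Rightarrow> 'a set \<Rightarrow> ('a set \<times> 'a set) set \<Rightarrow> bool" where
  "pseudo_USO U W E \<longleftrightarrow>
     cube_orientation U W E \<and>
     \<not> has_unique_sink E U W \<and>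
     (\<forall>U' W'. U \<subseteq> U' \<and> U' \<subseteq> W' \<and> W' \<subseteq> W \<and> interval U' W' \<noteq> interval U W
        \<longrightarrow> has_unique_sink E U' W')"

definition directed_cycle :: "('a set \<times> 'a set) set \<Rightarrow> 'a set list \<Rightarrow> bool" where
  "directed_cycle E cs \<longleftrightarrow> length cs \<ge> 2 \<and> distinct cs \<and>
     (\<forall>k < length cs. (cs ! k, cs ! ((k + 1) mod length cs)) \<in> E)"

end

theory Submission
  imports Defs
begin

(* Write V + i for V \<union> {i}. The sink V and the second sink of the pseudo USO must be
   antipodal: otherwise some facet contains both. Hence W is a sink, so in the proper face
   [V + i, W] the vertex V + i is not the sink and has an out-edge to some V + i + j. Since
   m >= 3, the 2-face [V, V + i + j] is proper with sink V, so V + i + j has an out-edge to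
   V + i or V + j. Every vertex of the first two layers above V thus has an out-neighbour
   inside these finitely many vertices, and a walk along such edges must close a directed
   cycle. *)

lemma symdiff_singleton: "symdiff X {i} = (if i \<in> X then X - {i} else insert i X)"
  by (auto simp: symdiff_def)

lemma interval_eq_iff:
  assumes "U \<subseteq> W" and "U' \<subseteq> W'"
  shows "interval U W = interval U' W' \<longleftrightarrow> U = U' \<and> W = W'"
proof
  assume eq: "interval U W = interval U' W'"
  have "U \<in> interval U' W'" "W \<in> interval U' W'"
    unfolding eq[symmetric] using assms by (auto simp: interval_def)
  moreover have "U' \<in> interval U W" "W' \<in> interval U W"
    unfolding eq using assms by (auto simp: interval_def)
  ultimately show "U = U' \<and> W = W'" by (auto simp: interval_def)
qed simp

lemma finite_range_first_repetition:
  fixes s :: "nat \<Rightarrow> 'a"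
  assumes "finite (range s)"
  obtains a b where "a < b" and "s a = s b" and "inj_on s {..<b}"
proof -
  define repeats where "repeats b \<longleftrightarrow> (\<exists>a<b. s a = s b)" for b
  have "\<not> inj s"
    using assms finite_imageD infinite_UNIV_nat by blast
  then obtain p q where "p < q" "s p = s q"
    unfolding inj_def by (metis linorder_neqE_nat)
  then have "repeats q" by (auto simp: repeats_def)
  define b where "b = (LEAST b. repeats b)"
  have "repeats b"
    unfolding b_def using \<open>repeats q\<close> by (rule LeastI)
  moreover have "inj_on s {..<b}"
  proof (rule inj_onI)
    fix x y assume "x \<in> {..<b}" "y \<in> {..<b}" "s x = s y"
    then have "\<not> repeats (max x y)"
      unfolding b_def by (intro not_less_Least) (simp add: max_def)
    with \<open>s x = s y\<close> show "x = y"
      unfolding repeats_def by (metis linorder_neqE_nat max.absorb3 max.absorb4)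
  qed
  ultimately show thesis
    using that unfolding repeats_def by blast
qed

lemma walk_in_finite_set_has_directed_cycle:
  fixes s :: "nat \<Rightarrow> 'a set"
  assumes "finite (range s)"
    and walk: "\<And>k. (s k, s (Suc k)) \<in> E"
    and irrefl: "\<And>X. (X, X) \<notin> E"
  shows "\<exists>cs. directed_cycle E cs \<and> set cs \<subseteq> range s"
proof -
  obtain a b where "a < b" and closes: "s a = s b" and inj: "inj_on s {..<b}"
    using finite_range_first_repetition[OF assms(1)] .
  define cs where "cs = map s [a..<b]"
  have len: "length cs = b - a"
    by (simp add: cs_def)
  have "b \<noteq> Suc a"
    using walk[of a] irrefl closes by auto
  then have "length cs \<ge> 2"
    using \<open>a < b\<close> len by linarith
  moreover have "distinct cs"
    unfolding cs_def distinct_map by (auto intro: inj_on_subset[OF inj])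
  moreover have "(cs ! k, cs ! ((k + 1) mod length cs)) \<in> E" if "k < length cs" for k
  proof (cases "Suc k < length cs")
    case True
    then show ?thesis
      using walk[of "a + k"] len by (simp add: cs_def)
  next
    case False
    then have "Suc k = length cs"
      using that by simp
    then have "Suc (a + k) = b" and "(k + 1) mod length cs = 0"
      using len by auto
    then show ?thesis
      using walk[of "a + k"] closes \<open>a < b\<close> by (simp add: cs_def)
  qed
  moreover have "set cs \<subseteq> range s"
    by (auto simp: cs_def)
  ultimately show ?thesis
    unfolding directed_cycle_def by blast
qed

lemma successor_closed_finite_set_has_directed_cycle:
  assumes "finite L" and "X \<in> L"
    and succ: "\<And>X. X \<in> L \<Longrightarrow> \<exists>Y\<in>L. (X, Y) \<in> E"
    and irrefl: "\<And>X. (X, X) \<notin> E"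
  shows "\<exists>cs. directed_cycle E cs \<and> set cs \<subseteq> L"
proof -
  obtain f where f: "\<And>X. X \<in> L \<Longrightarrow> f X \<in> L \<and> (X, f X) \<in> E"
    using succ by metis
  define s where "s k = (f ^^ k) X" for k
  have s_in: "s k \<in> L" for k
    by (induction k) (simp_all add: s_def f \<open>X \<in> L\<close>)
  then have "range s \<subseteq> L"
    by blast
  then have "finite (range s)"
    using \<open>finite L\<close> by (rule finite_subset)
  moreover have "(s k, s (Suc k)) \<in> E" for k
    using f[OF s_in[of k]] by (simp add: s_def)
  ultimately obtain cs where "directed_cycle E cs" and "set cs \<subseteq> range s"
    using walk_in_finite_set_has_directed_cycle irrefl by blast
  with \<open>range s \<subseteq> L\<close> show ?thesis
    by blast
qed

lemma cube_orientation_edge_flip: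
  assumes "cube_orientation U W E" and "(X, Y) \<in> E"
  shows "\<exists>i\<in>W - U. Y = symdiff X {i}"
  using assms unfolding cube_orientation_def by blast

lemma cube_orientation_irrefl:
  assumes "cube_orientation U W E"
  shows "(X, X) \<notin> E"
proof
  assume "(X, X) \<in> E"
  then obtain i where "X = symdiff X {i}"
    using cube_orientation_edge_flip[OF assms] by blast
  then show False
    by (cases "i \<in> X") (auto simp: symdiff_singleton)
qed

lemma cube_orientation_edge_up:
  assumes "cube_orientation U W E" and "(X, Y) \<in> E" and "Y \<in> interval X W'"
  shows "\<exists>l\<in>W' - X. Y = insert l X"
proof -
  obtain l where "Y = symdiff X {l}"
    using cube_orientation_edge_flip[OF assms(1,2)] by blast
  with assms(3) show ?thesis
    by (auto simp: symdiff_singleton interval_def split: if_splits)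
qed

lemma cube_orientation_edge_down:
  assumes "cube_orientation U W E" and "(X, Y) \<in> E" and "Y \<in> interval U' X"
  shows "\<exists>l\<in>X - U'. Y = X - {l}"
proof -
  obtain l where "Y = symdiff X {l}"
    using cube_orientation_edge_flip[OF assms(1,2)] by blast
  with assms(3) show ?thesis
    by (auto simp: symdiff_singleton interval_def split: if_splits)
qed

lemma face_sink_subface:
  assumes "face_sink E U W X" and "U \<subseteq> U'" and "W' \<subseteq> W" and "X \<in> interval U' W'"
  shows "face_sink E U' W' X"
  using assms unfolding face_sink_def interval_def by blast

lemma has_unique_sink_out_edge:
  assumes "has_unique_sink E U W" and "face_sink E U W X"
    and "Z \<in> interval U W" and "Z \<noteq> X"
  shows "\<exists>Y\<in>interval U W. (Z, Y) \<in> E"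
  using assms unfolding has_unique_sink_def face_sink_def by blast

lemma pseudo_USO_proper_face:
  assumes "pseudo_USO U W E" and "U \<subseteq> U'" and "U' \<subseteq> W'" and "W' \<subseteq> W"
    and "U' \<noteq> U \<or> W' \<noteq> W"
  shows "has_unique_sink E U' W'"
proof -
  have "interval U' W' \<noteq> interval U W"
    using assms(2-5) interval_eq_iff[of U' W' U W] by blast
  with assms(1-4) show ?thesis
    unfolding pseudo_USO_def by blast
qed

lemma pseudo_USO_sink_antipodal:
  assumes pseudo: "pseudo_USO U W E" and sink: "face_sink E U W U"
  shows "face_sink E U W W"
proof -
  have "\<not> has_unique_sink E U W"
    using pseudo by (simp add: pseudo_USO_def)
  then obtain S where S: "face_sink E U W S" and "S \<noteq> U"
    using sink unfolding has_unique_sink_def by blast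
  have "S = W"
  proof (rule ccontr)
    assume "S \<noteq> W"
    moreover have "U \<subseteq> S" "S \<subseteq> W"
      using S by (auto simp: face_sink_def interval_def)
    ultimately obtain i where i: "i \<in> W" "i \<notin> S" "i \<notin> U"
      by blast
    have "has_unique_sink E U (W - {i})"
      by (rule pseudo_USO_proper_face[OF pseudo]) (use i \<open>U \<subseteq> S\<close> \<open>S \<subseteq> W\<close> in auto)
    moreover have "face_sink E U (W - {i}) U"
      by (rule face_sink_subface[OF sink]) (use i \<open>U \<subseteq> S\<close> \<open>S \<subseteq> W\<close> in \<open>auto simp: interval_def\<close>)
    moreover have "face_sink E U (W - {i}) S"
      by (rule face_sink_subface[OF S]) (use i \<open>U \<subseteq> S\<close> \<open>S \<subseteq> W\<close> in \<open>auto simp: interval_def\<close>)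
    ultimately show False
      using \<open>S \<noteq> U\<close> unfolding has_unique_sink_def by blast
  qed
  with S show ?thesis
    by simp
qed

lemma pseudo_USO_up_edge:
  assumes pseudo: "pseudo_USO V W E" and sink: "face_sink E V W V"
    and i: "i \<in> W - V" and "insert i V \<noteq> W"
  shows "\<exists>j\<in>W - V. (insert i V, insert j (insert i V)) \<in> E"
proof -
  have co: "cube_orientation V W E" and "V \<subseteq> W"
    using pseudo by (auto simp: pseudo_USO_def cube_orientation_def)
  have "has_unique_sink E (insert i V) W"
    by (rule pseudo_USO_proper_face[OF pseudo]) (use i \<open>V \<subseteq> W\<close> in auto)
  moreover have "face_sink E (insert i V) W W"
    by (rule face_sink_subface[OF pseudo_USO_sink_antipodal[OF pseudo sink]])
      (use i \<open>V \<subseteq> W\<close> in \<open>auto simp: interval_def\<close>)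
  moreover have "insert i V \<in> interval (insert i V) W"
    using i \<open>V \<subseteq> W\<close> by (auto simp: interval_def)
  ultimately obtain Y where "Y \<in> interval (insert i V) W" "(insert i V, Y) \<in> E"
    using has_unique_sink_out_edge \<open>insert i V \<noteq> W\<close> by blast
  then show ?thesis
    using cube_orientation_edge_up[OF co] by fastforce
qed

lemma pseudo_USO_down_edge:
  assumes pseudo: "pseudo_USO V W E" and sink: "face_sink E V W V"
    and ij: "i \<in> W - V" "j \<in> W - V" "i \<noteq> j" and "V \<union> {i, j} \<noteq> W"
  shows "(V \<union> {i, j}, V \<union> {i}) \<in> E \<or> (V \<union> {i, j}, V \<union> {j}) \<in> E"
proof -
  have co: "cube_orientation V W E" and "V \<subseteq> W"
    using pseudo by (auto simp: pseudo_USO_def cube_orientation_def)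
  have "has_unique_sink E V (V \<union> {i, j})"
    by (rule pseudo_USO_proper_face[OF pseudo]) (use ij \<open>V \<subseteq> W\<close> \<open>V \<union> {i, j} \<noteq> W\<close> in auto)
  moreover have "face_sink E V (V \<union> {i, j}) V"
    by (rule face_sink_subface[OF sink]) (use ij \<open>V \<subseteq> W\<close> in \<open>auto simp: interval_def\<close>)
  moreover have "V \<union> {i, j} \<in> interval V (V \<union> {i, j})" and "V \<union> {i, j} \<noteq> V"
    using ij by (auto simp: interval_def)
  ultimately obtain Y where "Y \<in> interval V (V \<union> {i, j})" and edge: "(V \<union> {i, j}, Y) \<in> E"
    using has_unique_sink_out_edge by blast
  then obtain l where "l \<in> V \<union> {i, j} - V" and "Y = V \<union> {i, j} - {l}"
    using cube_orientation_edge_down[OF co] by blast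
  then have "Y = V \<union> {j} \<or> Y = V \<union> {i}"
    using ij by auto
  with edge show ?thesis
    by blast
qed

lemma pseudo_USO_low_layer_out_edge:
  assumes pseudo: "pseudo_USO V W E" and sink: "face_sink E V W V"
    and "card (W - V) \<ge> 3" and i: "i \<in> W - V" and j: "j \<in> W - V"
  shows "\<exists>i'\<in>W - V. \<exists>j'\<in>W - V. (V \<union> {i, j}, V \<union> {i', j'}) \<in> E"
proof (cases "i = j")
  case True
  have "\<not> W - V \<subseteq> {i}"
    using card_mono[of "{i}" "W - V"] \<open>card (W - V) \<ge> 3\<close> by auto
  then have "insert i V \<noteq> W"
    by blast
  then obtain j' where "j' \<in> W - V" and "(insert i V, insert j' (insert i V)) \<in> E"
    using pseudo_USO_up_edge[OF pseudo sink i] by blast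
  moreover have "insert i V = V \<union> {i, j}" and "insert j' (insert i V) = V \<union> {i, j'}"
    using True by auto
  ultimately show ?thesis
    using i by metis
next
  case False
  have "\<not> W - V \<subseteq> {i, j}"
    using card_mono[of "{i, j}" "W - V"] \<open>card (W - V) \<ge> 3\<close> False by auto
  then have "V \<union> {i, j} \<noteq> W"
    by blast
  then have "(V \<union> {i, j}, V \<union> {i, i}) \<in> E \<or> (V \<union> {i, j}, V \<union> {j, j}) \<in> E"
    using pseudo_USO_down_edge[OF pseudo sink i j False] by simp
  then show ?thesis
    using i j by blast
qed

theorem lemma3p4:
  fixes V W :: "'a set" and E :: "('a set \<times> 'a set) set" and m :: nat
  assumes "pseudo_USO V W E"
    and "cube_dim V W = m"
    and "m \<ge> 3"
    and "face_sink E V W V"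
  shows "\<exists>cs. directed_cycle E cs \<and>
           (\<forall>X \<in> set cs. \<exists>i \<in> W - V. \<exists>j \<in> W - V. X = V \<union> {i} \<or> X = V \<union> {i, j})"
proof -
  \<comment> \<open>the pairs with i = j give the first layer\<close>
  define L where "L = (\<lambda>(i, j). V \<union> {i, j}) ` ((W - V) \<times> (W - V))"
  have card: "card (W - V) \<ge> 3"
    using assms(2,3) by (simp add: cube_dim_def)
  then have "finite (W - V)" and "W - V \<noteq> {}"
    by (metis card.infinite not_numeral_le_zero, metis card.empty not_numeral_le_zero)
  then obtain i where "i \<in> W - V"
    by blast
  then have "V \<union> {i, i} \<in> L"
    by (auto simp: L_def)
  moreover have "finite L"
    using \<open>finite (W - V)\<close> by (simp add: L_def)
  moreover have "\<exists>Y\<in>L. (X, Y) \<in> E" if "X \<in> L" for X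
    using that pseudo_USO_low_layer_out_edge[OF assms(1,4) card] by (fastforce simp: L_def)
  moreover have "cube_orientation V W E"
    using assms(1) by (simp add: pseudo_USO_def)
  ultimately obtain cs where "directed_cycle E cs" and "set cs \<subseteq> L"
    using successor_closed_finite_set_has_directed_cycle cube_orientation_irrefl by metis
  moreover have "\<exists>i \<in> W - V. \<exists>j \<in> W - V. X = V \<union> {i, j}" if "X \<in> L" for X
    using that by (auto simp: L_def)
  ultimately show ?thesis
    by blast
qed

end
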